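(* Let $n,k$ be positive integers, $m=kn+1$, $\delta=\frac{(m-1)(n-1)}2$, let $\Delta$ be a zero-normalized $\Gamma_{m,n}$-semimodule and $D=D(\Delta)$. Then $\mathrm{bounce}(G_{kn+1}(D))=\delta-|D|$.
   Context: $\Gamma_{m,n}=\{am+bn:a,b\in\mathbb{Z}_{\ge0}\}$. A $\Gamma_{m,n}$-semimodule is $\Delta\subset\mathbb{Z}_{\ge0}$ with $\Delta+\Gamma_{m,n}\subset\Delta$; zero-normalized means $\min\Delta=0$. Label the box with lower-left corner $(x,y)$, $x,y\in\mathbb{Z}_{\ge0}$, of the positive quadrant by $mn-m(1+x)-n(1+y)$; $D(\Delta)$ is the set of boxes whose labels lie in $\Delta\setminus\Gamma_{m,n}$ (a Young diagram in the width-$m$, height-$n$ rectangle below its diagonal). Let $a_0<a_1<\dots<a_{m-1}$ be the $m$-generators of $\Delta$ (elements $a\in\Delta$ with $a-m\notin\Delta$) and $g(x)=\#(([x,x+n)\cap\mathbb{Z})\setminus\Delta)$; then $g(a_0)\ge\dots\ge g(a_{m-1})$, and $G_{kn+1}(D)$ is the Young diagram whose column heights are $g(a_0),\dots,g(a_{m-1})$ (columns indexed $0,\dots,m-1$ from west to east, drawn in the rectangle with southwest corner $(0,0)$). Loehr's bounce path of a diagram $E$ in this rectangle: start at $(x_0,y_0)=(0,n)$; for $i=0,1,2,\dots$, from $(x_i,y_i)$ step south to $(x_i,y_i')$ where $y_i'$ is the height of column $x_i$ of $E$ (so the path stays outside $E$; this is the vertical step $v_i=y_i-y_i'$), then step east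 by $h_i=v_i+v_{i-1}+\dots+v_{i-k+1}$ (omitting terms with negative index) to $(x_{i+1},y_{i+1})=(x_i+h_i,y_i')$; stop after the south step that reaches height $0$. Then $\mathrm{bounce}(E)$ is the sum of the heights $y_i'$ of all southwest corners reached, i.e. $\sum_i\big(n-\sum_{j\le i}v_j\big)$. *)

theory Defs
  imports Main
begin

definition Gamma :: "nat \<Rightarrow> nat \<Rightarrow> nat set" where
  "Gamma m n = {a * m + b * n | a b. True}"

definition semimodule :: "nat \<Rightarrow> nat \<Rightarrow> nat set \<Rightarrow> bool" where
  "semimodule m n \<Delta> \<longleftrightarrow> (\<forall>x\<in>\<Delta>. \<forall>g\<in>Gamma m n. x + g \<in> \<Delta>)"

definition zero_normalized :: "nat set \<Rightarrow> bool" where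
  "zero_normalized \<Delta> \<longleftrightarrow> \<Delta> \<noteq> {} \<and> (LEAST x. x \<in> \<Delta>) = 0"

(* label of the box with lower-left corner (x,y) *)
definition label :: "nat \<Rightarrow> nat \<Rightarrow> nat \<times> nat \<Rightarrow> int" where
  "label m n p = int m * int n - int m * (1 + int (fst p)) - int n * (1 + int (snd p))"

definition Ddiag :: "nat \<Rightarrow> nat \<Rightarrow> nat set \<Rightarrow> (nat \<times> nat) set" where
  "Ddiag m n \<Delta> = {p. \<exists>a. label m n p = int a \<and> a \<in> \<Delta> - Gamma m n}"

definition m_generators :: "nat \<Rightarrow> nat set \<Rightarrow> nat set" where
  "m_generators m \<Delta> = {a \<in> \<Delta>. \<not> (a \<ge> m \<and> a - m \<in> \<Delta>)}"

definition gen :: "nat \<Rightarrow> nat set \<Rightarrow> nat \<Rightarrow> nat" where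
  "gen m \<Delta> i = sorted_list_of_set (m_generators m \<Delta>) ! i"

definition gfun :: "nat \<Rightarrow> nat set \<Rightarrow> nat \<Rightarrow> nat" where
  "gfun n \<Delta> x = card ({x..<x + n} - \<Delta>)"

definition Gdiag :: "nat \<Rightarrow> nat \<Rightarrow> nat set \<Rightarrow> (nat \<times> nat) set" where
  "Gdiag m n \<Delta> = {(i, y). i < m \<and> y < gfun n \<Delta> (gen m \<Delta> i)}"

definition colheight :: "(nat \<times> nat) set \<Rightarrow> nat \<Rightarrow> nat" where
  "colheight E x = card {y. (x, y) \<in> E}"

(* state before step i: (x_i, y_i, [v_0,...,v_{i-1}]) *)
fun bstate :: "nat \<Rightarrow> nat \<Rightarrow> (nat \<times> nat) set \<Rightarrow> nat \<Rightarrow> nat \<times> nat \<times> nat list" where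
  "bstate n k E 0 = (0, n, [])"
| "bstate n k E (Suc i) =
     (case bstate n k E i of (x, y, vs) \<Rightarrow>
        let y' = colheight E x; v = y - y'; vs' = vs @ [v];
            h = sum_list (take k (rev vs')) in (x + h, y', vs'))"

(* y_i' : height reached by the i-th south step *)
definition yprime :: "nat \<Rightarrow> nat \<Rightarrow> (nat \<times> nat) set \<Rightarrow> nat \<Rightarrow> nat" where
  "yprime n k E i = colheight E (fst (bstate n k E i))"

definition bounce :: "nat \<Rightarrow> nat \<Rightarrow> (nat \<times> nat) set \<Rightarrow> nat" where
  "bounce n k E = (\<Sum>i \<le> (LEAST i. yprime n k E i = 0). yprime n k E i)"

end

theory Submission
  imports Defs
begin

text \<open>Put \<open>m = k n + 1\<close> and let \<open>c\<^sub>i\<close> be the number of \<open>m\<close>-generators of \<open>\<Delta>\<close> that are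
  \<open>\<le> i n\<close>. By induction, step \<open>i\<close> of the bounce path of \<open>G\<^sub>k\<^sub>n\<^sub>+\<^sub>1(D)\<close> starts in column
  \<open>c\<^sub>i - 1\<close>, whose height is \<open>g\<close> at the largest generator \<open>\<le> i n\<close>; everything between that
  generator and \<open>i n\<close> lies in \<open>\<Delta>\<close>, so this height is \<open>g(i n)\<close>. The induction step rests on
  \<open>c\<^sub>i\<^sub>+\<^sub>1 - c\<^sub>i = g((i - k) n) - g(i n)\<close>, which is the sum of the last \<open>k\<close> vertical steps:
  count \<open>\<Delta> \<inter> [0, M]\<close> as the generators up to \<open>M\<close> plus the translates by \<open>m\<close> of
  \<open>\<Delta> \<inter> [0, M - m]\<close>, and compare \<open>M = i n\<close> with \<open>M = (i + 1) n\<close>; the new translates come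
  from the window \<open>[(i - k) n, (i - k + 1) n)\<close>. Hence the bounce is \<open>\<Sum>\<^sub>i g(i n) = |\<nat> - \<Delta>|\<close>,
  and the theorem follows from \<open>|\<nat> - \<Gamma>| = \<delta>\<close> and \<open>|D| = |\<Delta> - \<Gamma>|\<close>.\<close>

lemma sorted_list_of_set_nth_card_less:
  fixes S :: "'a::linorder set"
  assumes "finite S" "s \<in> S"
  shows "sorted_list_of_set S ! card {t \<in> S. t < s} = s"
proof -
  define xs where "xs = sorted_list_of_set S"
  have sorted: "sorted_wrt (<) xs" and set_xs: "set xs = S" and "distinct xs"
    using assms by (simp_all add: xs_def)
  obtain j where j: "j < length xs" "xs ! j = s"
    using assms set_xs by (metis in_set_conv_nth)
  have "{t \<in> S. t < s} = set (take j xs)"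
  proof (intro set_eqI iffI)
    fix t assume "t \<in> {t \<in> S. t < s}"
    then obtain i where "i < length xs" "xs ! i = t" "t < s"
      using set_xs by (auto simp: in_set_conv_nth)
    moreover have "i < j"
    proof (rule ccontr)
      assume "\<not> i < j"
      then have "xs ! j \<le> xs ! i"
        using sorted j calculation by (metis le_neq_implies_less linorder_not_less order.strict_implies_order sorted_wrt_nth_less)
      then show False
        using calculation j by simp
    qed
    ultimately show "t \<in> set (take j xs)"
      by (metis in_set_conv_nth length_take min_less_iff_conj nth_take j(1))
  next
    fix t assume "t \<in> set (take j xs)"
    then obtain i where "i < j" "xs ! i = t"
      using j by (auto simp: in_set_conv_nth)
    then show "t \<in> {t \<in> S. t < s}"
      using sorted j set_xs by (auto simp: sorted_wrt_iff_nth_less)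
  qed
  then have "card {t \<in> S. t < s} = j"
    using \<open>distinct xs\<close> j by (simp add: distinct_card)
  then show ?thesis
    using j xs_def by simp
qed

lemma sum_diff_Suc_antimono_nat:
  fixes f :: "nat \<Rightarrow> nat"
  assumes "\<And>j. f (Suc j) \<le> f j" "a \<le> b"
  shows "(\<Sum>j = a..<b. f j - f (Suc j)) = f a - f b"
proof -
  have "f b \<le> f a"
    using assms by (metis lift_Suc_antimono_le)
  have "int (\<Sum>j = a..<b. f j - f (Suc j)) = (\<Sum>j = a..<b. - int (f (Suc j)) - - int (f j))"
    using assms(1) by simp
  also have "\<dots> = int (f a) - int (f b)"
    using sum_Suc_diff'[OF assms(2), of "\<lambda>j. - int (f j)"] by simp
  finally show ?thesis
    using \<open>f b \<le> f a\<close> by linarith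
qed

lemma sum_list_take_rev_diffs:
  fixes f :: "nat \<Rightarrow> nat"
  assumes "\<And>j. f (Suc j) \<le> f j"
  shows "sum_list (take k (rev (map (\<lambda>j. f j - f (Suc j)) [0..<N]))) = f (N - k) - f N"
proof -
  have "take k (rev (map (\<lambda>j. f j - f (Suc j)) [0..<N]))
      = rev (map (\<lambda>j. f j - f (Suc j)) [N - k..<N])"
    by (simp add: take_rev drop_map)
  then show ?thesis
    using sum_diff_Suc_antimono_nat[of f "N - k" N, OF assms]
    by (simp add: sum_list_rev interv_sum_list_conv_sum_set_nat)
qed

lemma colheight_Gdiag:
  "colheight (Gdiag m n \<Delta>) x = (if x < m then gfun n \<Delta> (gen m \<Delta> x) else 0)"
proof -
  have "{y. (x, y) \<in> Gdiag m n \<Delta>} = (if x < m then {..<gfun n \<Delta> (gen m \<Delta> x)} else {})"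
    unfolding Gdiag_def by auto
  then show ?thesis
    unfolding colheight_def by simp
qed

lemma card_window_Int_add_gfun: "card ({x..<x + n} \<inter> \<Delta>) + gfun n \<Delta> x = n"
proof -
  have "card {x..<x + n} = card ({x..<x + n} \<inter> \<Delta>) + card ({x..<x + n} - \<Delta>)"
    by (metis card_Int_Diff finite_atLeastLessThan)
  then show ?thesis
    unfolding gfun_def by simp
qed

lemma card_gaps_lessThan_mult:
  "card ({..<j * n} - \<Delta>) = (\<Sum>i<j. gfun n \<Delta> (i * n))"
proof (induction j)
  case (Suc j)
  have "{..<Suc j * n} - \<Delta> = ({..<j * n} - \<Delta>) \<union> ({j * n..<j * n + n} - \<Delta>)"
    by auto
  moreover have "({..<j * n} - \<Delta>) \<inter> ({j * n..<j * n + n} - \<Delta>) = {}"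
    by auto
  ultimately show ?case
    using Suc by (simp add: card_Un_disjoint gfun_def)
qed simp

lemma card_Collect_less_add:
  fixes A :: "nat set"
  shows "card {t \<in> A. t < a + d} = card {t \<in> A. t < a} + card ({a..<a + d} \<inter> A)"
proof -
  have "{t \<in> A. t < a + d} = {t \<in> A. t < a} \<union> ({a..<a + d} \<inter> A)"
    by auto
  then show ?thesis
    by (simp add: card_Un_disjoint disjoint_iff)
qed

section \<open>The semigroup generated by \<open>k n + 1\<close> and \<open>n\<close>\<close>

lemma label_nonneg_imp_fst_less:
  assumes "0 < n" "0 \<le> label m n (x, y)"
  shows "x < n"
proof -
  have "0 < int n * (1 + int y)"
    using assms(1) by simp
  then have "int m * (1 + int x) < int m * int n"
    using assms(2) unfolding label_def by simp
  then show ?thesis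
    by (simp add: mult_less_cancel_left)
qed

lemma mem_Gamma_kn1_iff:
  assumes "0 < n"
  shows "y \<in> Gamma (k * n + 1) n \<longleftrightarrow> k * (y mod n) \<le> y div n"
proof
  assume "y \<in> Gamma (k * n + 1) n"
  then obtain a b where "y = a * (k * n + 1) + b * n"
    unfolding Gamma_def by blast
  then have "y = n * (a * k + b + a div n) + a mod n"
    by (simp add: algebra_simps)
  then have "y mod n = a mod n" "y div n = a * k + b + a div n"
    using assms by simp_all
  moreover have "k * (a mod n) \<le> a * k"
    by (simp add: mult.commute)
  ultimately show "k * (y mod n) \<le> y div n"
    by (metis trans_le_add1 le_trans)
next
  assume "k * (y mod n) \<le> y div n"
  then have "y = (y mod n) * (k * n + 1) + (y div n - k * (y mod n)) * n"
    by (simp add: algebra_simps diff_mult_distrib)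
  then show "y \<in> Gamma (k * n + 1) n"
    unfolding Gamma_def by blast
qed

lemma mem_Gamma_kn1_if_ge:
  assumes "0 < n" "k * n * n \<le> y"
  shows "y \<in> Gamma (k * n + 1) n"
proof -
  have "k * n \<le> y div n"
    using assms by (metis div_le_mono nonzero_mult_div_cancel_right not_gr_zero)
  moreover have "k * (y mod n) \<le> k * n"
    using assms(1) by simp
  ultimately show ?thesis
    using mem_Gamma_kn1_iff[OF assms(1), of y k] by linarith
qed

lemma bij_betw_Gamma_kn1_gaps:
  assumes "0 < n"
  shows "bij_betw (\<lambda>(r, q). q * n + r) (SIGMA r:{..<n}. {..<k * r}) (- Gamma (k * n + 1) n)"
proof (rule bij_betw_imageI)
  show "inj_on (\<lambda>(r, q). q * n + r) (SIGMA r:{..<n}. {..<k * r})"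
  proof (rule inj_onI, clarify)
    fix r q r' q'
    assume "r < n" "r' < n" and eq: "q * n + r = q' * n + r'"
    then have "r = r'"
      by (metis mod_mult_self3 mod_less)
    then show "r = r' \<and> q = q'"
      using eq assms by simp
  qed
next
  show "(\<lambda>(r, q). q * n + r) ` (SIGMA r:{..<n}. {..<k * r}) = - Gamma (k * n + 1) n"
  proof (intro set_eqI iffI)
    fix y assume "y \<in> (\<lambda>(r, q). q * n + r) ` (SIGMA r:{..<n}. {..<k * r})"
    then obtain r q where "r < n" "q < k * r" "y = q * n + r"
      by auto
    then show "y \<in> - Gamma (k * n + 1) n"
      using mem_Gamma_kn1_iff[OF assms] by simp
  next
    fix y assume "y \<in> - Gamma (k * n + 1) n"
    then have "y div n < k * (y mod n)" "y mod n < n"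
      using mem_Gamma_kn1_iff[OF assms] assms by auto
    then show "y \<in> (\<lambda>(r, q). q * n + r) ` (SIGMA r:{..<n}. {..<k * r})"
      by (auto intro!: image_eqI[where x = "(y mod n, y div n)"])
  qed
qed

lemma finite_Gamma_kn1_gaps: "0 < n \<Longrightarrow> finite (- Gamma (k * n + 1) n)"
  using bij_betw_finite[OF bij_betw_Gamma_kn1_gaps] by auto

lemma double_sum_lessThan_nat: "2 * (\<Sum>r<n. r) = n * (n - 1 :: nat)"
  by (induction n) (auto simp: algebra_simps)

lemma double_card_Gamma_kn1_gaps:
  assumes "0 < n"
  shows "2 * card (- Gamma (k * n + 1) n) = k * n * (n - 1)"
proof -
  have "card (- Gamma (k * n + 1) n) = k * (\<Sum>r<n. r)"
    using bij_betw_same_card[OF bij_betw_Gamma_kn1_gaps[OF assms]]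
    by (simp add: sum_distrib_left)
  then show ?thesis
    using double_sum_lessThan_nat[of n] by simp
qed

lemma label_kn1_inj:
  assumes "0 < n" "x < n" "x' < n"
    and "label (k * n + 1) n (x, y) = label (k * n + 1) n (x', y')"
  shows "x = x' \<and> y = y'"
proof -
  have "int (x + n * (k * (1 + x) + 1 + y)) = int (x' + n * (k * (1 + x') + 1 + y'))"
    using assms(4) unfolding label_def by (simp add: algebra_simps)
  then have eq: "x + n * (k * (1 + x) + 1 + y) = x' + n * (k * (1 + x') + 1 + y')"
    by (simp only: of_nat_eq_iff)
  then have "x = x'"
    using assms(2,3) by (metis mod_mult_self2 mod_less mult.commute)
  then show ?thesis
    using eq assms(1) by simp
qed

lemma label_kn1_gap:
  assumes "0 < n" "a \<notin> Gamma (k * n + 1) n"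
  shows "label (k * n + 1) n (n - Suc (a mod n), k * (a mod n) - Suc (a div n)) = int a"
proof -
  have "a div n < k * (a mod n)" "a mod n < n"
    using mem_Gamma_kn1_iff[OF assms(1)] assms by auto
  moreover have "int a = int (a div n) * int n + int (a mod n)"
    by (metis of_nat_add of_nat_mult div_mult_mod_eq)
  ultimately show ?thesis
    unfolding label_def by (simp add: of_nat_diff algebra_simps)
qed

lemma card_Ddiag_kn1:
  assumes "0 < n"
  shows "card (Ddiag (k * n + 1) n \<Delta>) = card (\<Delta> - Gamma (k * n + 1) n)"
proof -
  let ?m = "k * n + 1" and ?l = "\<lambda>p. nat (label (k * n + 1) n p)"
  have "bij_betw ?l (Ddiag ?m n \<Delta>) (\<Delta> - Gamma ?m n)"
  proof (rule bij_betw_imageI)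
    show "inj_on ?l (Ddiag ?m n \<Delta>)"
    proof (rule inj_onI, clarify)
      fix x y x' y'
      assume "(x, y) \<in> Ddiag ?m n \<Delta>" "(x', y') \<in> Ddiag ?m n \<Delta>" "?l (x, y) = ?l (x', y')"
      then have "label ?m n (x, y) = label ?m n (x', y')"
        "0 \<le> label ?m n (x, y)" "0 \<le> label ?m n (x', y')"
        unfolding Ddiag_def by auto
      then show "x = x' \<and> y = y'"
        using label_kn1_inj label_nonneg_imp_fst_less assms by metis
    qed
  next
    show "?l ` Ddiag ?m n \<Delta> = \<Delta> - Gamma ?m n"
    proof (intro set_eqI iffI)
      fix a assume "a \<in> ?l ` Ddiag ?m n \<Delta>"
      then show "a \<in> \<Delta> - Gamma ?m n"
        unfolding Ddiag_def by auto
    next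
      fix a assume a: "a \<in> \<Delta> - Gamma ?m n"
      let ?p = "(n - Suc (a mod n), k * (a mod n) - Suc (a div n))"
      have "label ?m n ?p = int a"
        using label_kn1_gap[OF assms] a by blast
      then show "a \<in> ?l ` Ddiag ?m n \<Delta>"
        using a unfolding Ddiag_def by (auto intro!: image_eqI[where x = ?p])
    qed
  qed
  then show ?thesis
    by (rule bij_betw_same_card)
qed

section \<open>Semimodules over that semigroup\<close>

locale kn1_semimodule =
  fixes n k :: nat and \<Delta> :: "nat set"
  assumes n_pos: "0 < n"
    and semimodule: "semimodule (k * n + 1) n \<Delta>"
    and zero_normalized: "zero_normalized \<Delta>"
begin

abbreviation m :: nat where "m \<equiv> k * n + 1"

abbreviation gens :: "nat set" where "gens \<equiv> m_generators m \<Delta>"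

abbreviation g :: "nat \<Rightarrow> nat" where "g \<equiv> gfun n \<Delta>"

lemma zero_mem: "0 \<in> \<Delta>"
  using zero_normalized unfolding zero_normalized_def by (metis LeastI_ex ex_in_conv)

lemma Gamma_subset: "Gamma m n \<subseteq> \<Delta>"
  using semimodule zero_mem unfolding semimodule_def by fastforce

lemma add_mem: "x \<in> \<Delta> \<Longrightarrow> x + (a * m + b * n) \<in> \<Delta>"
  using semimodule unfolding semimodule_def Gamma_def by blast

lemma add_mult_m_mem: "x \<in> \<Delta> \<Longrightarrow> x + j * m \<in> \<Delta>"
  using add_mem[of x j 0] by simp

lemma add_mult_n_mem: "x \<in> \<Delta> \<Longrightarrow> x + j * n \<in> \<Delta>"
  using add_mem[of x 0 j] by simp

lemma mult_n_mem: "j * n \<in> \<Delta>"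
  using add_mult_n_mem[OF zero_mem] by simp

lemma mem_if_ge: "k * n * n \<le> y \<Longrightarrow> y \<in> \<Delta>"
  using mem_Gamma_kn1_if_ge[OF n_pos] Gamma_subset by blast

lemma finite_gaps: "finite (- \<Delta>)"
  by (rule finite_subset[OF _ finite_Gamma_kn1_gaps[OF n_pos]]) (use Gamma_subset in blast)

lemma pred_mem_if_not_generator:
  assumes "y \<in> \<Delta>" "y \<notin> gens"
  shows "y - 1 \<in> \<Delta>"
proof -
  have "m \<le> y" "y - m \<in> \<Delta>"
    using assms unfolding m_generators_def by auto
  moreover have "y - 1 = (y - m) + k * n"
    using \<open>m \<le> y\<close> by simp
  ultimately show ?thesis
    using add_mult_n_mem by metis
qed

lemma zero_generator: "0 \<in> gens"
  using zero_mem unfolding m_generators_def by simp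

lemma finite_generators: "finite gens"
proof (rule finite_subset)
  show "gens \<subseteq> {..<k * n * n + m}"
    unfolding m_generators_def using mem_if_ge by fastforce
qed simp

lemma inj_on_mod_generators: "inj_on (\<lambda>a. a mod m) gens"
proof -
  have False if gens: "a \<in> gens" "b \<in> gens" and "a mod m = b mod m" "a < b" for a b
  proof -
    obtain s where s: "b = a + m * s"
      using mod_eq_nat1E[of b m a] \<open>a mod m = b mod m\<close> \<open>a < b\<close> by auto
    moreover obtain j where "s = Suc j"
      using \<open>a < b\<close> s by (cases s) auto
    ultimately have "m \<le> b" "b - m = a + j * m"
      by (simp_all add: algebra_simps)
    then show False
      using gens add_mult_m_mem unfolding m_generators_def by auto
  qed
  then show ?thesis
    unfolding inj_on_def by (metis linorder_neqE_nat)
qed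

lemma card_generators_le: "card gens \<le> m"
proof -
  have "card gens = card ((\<lambda>a. a mod m) ` gens)"
    using inj_on_mod_generators by (simp add: card_image)
  also have "\<dots> \<le> card {..<m}"
    by (rule card_mono) auto
  finally show ?thesis
    by simp
qed

lemma g_Suc_eq: "x \<in> \<Delta> \<Longrightarrow> g (Suc x) = g x"
proof -
  assume x: "x \<in> \<Delta>"
  then have "x + n \<in> \<Delta>"
    using add_mult_n_mem[of x 1] by simp
  then have "{Suc x..<Suc x + n} - \<Delta> = {x..<x + n} - \<Delta>"
    using x by (auto simp: less_Suc_eq) (metis Suc_leI le_neq_implies_less)
  then show ?thesis
    unfolding gfun_def by simp
qed

lemma g_le: "g x \<le> n"
  unfolding gfun_def by (metis card_atLeastLessThan card_mono Diff_subset
      add_diff_cancel_left' finite_atLeastLessThan)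

lemma g_Suc_le: "g (Suc x) \<le> g x"
proof (cases "x \<in> \<Delta>")
  case True
  then show ?thesis
    using g_Suc_eq by simp
next
  case False
  let ?A = "{x..<x + n} - \<Delta>"
  have "x \<in> ?A"
    using False n_pos by auto
  have "{Suc x..<Suc x + n} - \<Delta> \<subseteq> insert (x + n) (?A - {x})"
    by auto
  then have "g (Suc x) \<le> card (insert (x + n) (?A - {x}))"
    unfolding gfun_def by (intro card_mono) auto
  also have "\<dots> \<le> Suc (card (?A - {x}))"
    by (simp add: card_insert_if)
  also have "\<dots> = card ?A"
    using \<open>x \<in> ?A\<close> by (intro card_Suc_Diff1) auto
  finally show ?thesis
    unfolding gfun_def .
qed

lemma g_antimono: "x \<le> y \<Longrightarrow> g y \<le> g x"
  by (rule lift_Suc_antimono_le[of g]) (use g_Suc_le in auto)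

lemma g_eq_if_interval_mem: "{a..<a + d} \<subseteq> \<Delta> \<Longrightarrow> g (a + d) = g a"
proof (induction d)
  case (Suc d)
  then have "{a..<a + d} \<subseteq> \<Delta>" "a + d \<in> \<Delta>"
    by auto
  then show ?case
    using Suc.IH g_Suc_eq by simp
qed simp

lemma mem_if_no_generator_between:
  assumes "N \<in> \<Delta>" "\<And>t. t \<in> gens \<Longrightarrow> t \<le> N \<Longrightarrow> t \<le> a" "a \<le> z" "z \<le> N"
  shows "z \<in> \<Delta>"
  using assms(3,4)
proof (induction "N - z" arbitrary: z)
  case 0
  then show ?case
    using assms(1) by simp
next
  case (Suc d)
  then have "Suc z \<in> \<Delta>"
    by simp
  moreover have "Suc z \<notin> gens"
    using assms(2) Suc.prems Suc.hyps(2) by fastforce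
  ultimately show ?case
    using pred_mem_if_not_generator by fastforce
qed

lemma g_eq_0_imp_mem:
  assumes "g x\<^sub>0 = 0" "x\<^sub>0 \<le> x"
  shows "x \<in> \<Delta>"
  using assms(2)
proof (induction x rule: less_induct)
  case (less x)
  show ?case
  proof (cases "x < x\<^sub>0 + n")
    case True
    have "{x\<^sub>0..<x\<^sub>0 + n} - \<Delta> = {}"
      using assms(1) unfolding gfun_def by simp
    then show ?thesis
      using True less.prems by (metis Diff_iff atLeastLessThan_iff empty_iff)
  next
    case False
    then have "x - n \<in> \<Delta>"
      using less.IH[of "x - n"] less.prems n_pos by simp
    then show ?thesis
      using add_mult_n_mem[of "x - n" 1] False by simp
  qed
qed

lemma g_kn_sq_eq_0: "g (k * n * n) = 0"
proof -
  have "{k * n * n..<k * n * n + n} - \<Delta> = {}"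
    using mem_if_ge by auto
  then show ?thesis
    unfolding gfun_def by simp
qed

section \<open>The bounce path of \<open>G\<^sub>k\<^sub>n\<^sub>+\<^sub>1(D)\<close>\<close>

definition num_gens :: "nat \<Rightarrow> nat" where
  "num_gens i = card {t \<in> gens. t \<le> i * n}"

definition last_gen :: "nat \<Rightarrow> nat" where
  "last_gen i = Max {t \<in> gens. t \<le> i * n}"

text \<open>\<open>height j\<close> is the height \<open>y\<^sub>j\<close> from which step \<open>j\<close> of the bounce path starts.\<close>

definition height :: "nat \<Rightarrow> nat" where
  "height j = (if j = 0 then n else g ((j - 1) * n))"

lemma
  shows last_gen_mem: "last_gen i \<in> gens"
    and last_gen_le: "last_gen i \<le> i * n"
    and le_last_gen: "t \<in> gens \<Longrightarrow> t \<le> i * n \<Longrightarrow> t \<le> last_gen i"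
proof -
  have fin: "finite {t \<in> gens. t \<le> i * n}"
    using finite_generators by simp
  moreover have "0 \<in> {t \<in> gens. t \<le> i * n}"
    using zero_generator by simp
  ultimately have "last_gen i \<in> {t \<in> gens. t \<le> i * n}"
    unfolding last_gen_def by (intro Max_in) auto
  then show "last_gen i \<in> gens" "last_gen i \<le> i * n"
    by auto
  show "t \<in> gens \<Longrightarrow> t \<le> i * n \<Longrightarrow> t \<le> last_gen i"
    unfolding last_gen_def using fin by simp
qed

lemma num_gens_eq: "num_gens i = Suc (card {t \<in> gens. t < last_gen i})"
proof -
  have "{t \<in> gens. t \<le> i * n} = insert (last_gen i) {t \<in> gens. t < last_gen i}"
  proof (intro set_eqI iffI)
    fix t assume "t \<in> {t \<in> gens. t \<le> i * n}"
    then show "t \<in> insert (last_gen i) {t \<in> gens. t < last_gen i}"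
      using le_last_gen[of t i] by auto
  next
    fix t assume "t \<in> insert (last_gen i) {t \<in> gens. t < last_gen i}"
    then show "t \<in> {t \<in> gens. t \<le> i * n}"
      using last_gen_mem[of i] last_gen_le[of i] by auto
  qed
  then show ?thesis
    unfolding num_gens_def using finite_generators by simp
qed

lemma num_gens_le: "num_gens i \<le> m"
  unfolding num_gens_def
  using card_mono[OF finite_generators, of "{t \<in> gens. t \<le> i * n}"] card_generators_le
  by auto

lemma gen_num_gens: "gen m \<Delta> (num_gens i - 1) = last_gen i"
  unfolding gen_def num_gens_eq
  using sorted_list_of_set_nth_card_less[OF finite_generators last_gen_mem] by simp

lemma g_last_gen: "g (last_gen i) = g (i * n)"
proof -
  have "{last_gen i..<last_gen i + (i * n - last_gen i)} \<subseteq> \<Delta>"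
    using mem_if_no_generator_between[OF mult_n_mem le_last_gen] by auto
  then have "g (last_gen i + (i * n - last_gen i)) = g (last_gen i)"
    by (rule g_eq_if_interval_mem)
  then show ?thesis
    using last_gen_le[of i] by simp
qed

lemma colheight_num_gens: "colheight (Gdiag m n \<Delta>) (num_gens i - 1) = g (i * n)"
proof -
  have "num_gens i - 1 < m"
    using num_gens_le[of i] num_gens_eq[of i] by linarith
  then show ?thesis
    using colheight_Gdiag gen_num_gens g_last_gen by simp
qed

lemma height_Suc_le: "height (Suc j) \<le> height j"
proof (cases j)
  case 0
  then show ?thesis
    unfolding height_def using g_le by simp
next
  case (Suc i)
  have "g (Suc i * n) \<le> g (i * n)"
    by (rule g_antimono) simp
  then show ?thesis
    unfolding height_def Suc by simp
qed

lemma card_le_eq_generators_add: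
  "card {t \<in> \<Delta>. t \<le> M} = card {t \<in> gens. t \<le> M} + card {u \<in> \<Delta>. u + m \<le> M}"
proof -
  let ?G = "{t \<in> gens. t \<le> M}" and ?T = "(\<lambda>u. u + m) ` {u \<in> \<Delta>. u + m \<le> M}"
  have "{t \<in> \<Delta>. t \<le> M} = ?G \<union> ?T"
  proof
    show "{t \<in> \<Delta>. t \<le> M} \<subseteq> ?G \<union> ?T"
    proof
      fix t assume t: "t \<in> {t \<in> \<Delta>. t \<le> M}"
      show "t \<in> ?G \<union> ?T"
      proof (cases "t \<in> gens")
        case False
        then have "t = (t - m) + m" "t - m \<in> \<Delta>"
          using t unfolding m_generators_def by auto
        then show ?thesis
          using t by (metis (mono_tags, lifting) UnI2 image_eqI mem_Collect_eq)
      qed (use t in \<open>intro UnI1, simp\<close>)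
    qed
    show "?G \<union> ?T \<subseteq> {t \<in> \<Delta>. t \<le> M}"
      using add_mult_m_mem[where j = 1] unfolding m_generators_def by auto
  qed
  then have "card {t \<in> \<Delta>. t \<le> M} = card (?G \<union> ?T)"
    by (rule arg_cong)
  also have "\<dots> = card ?G + card ?T"
  proof (rule card_Un_disjoint)
    show "finite ?T"
      by (rule finite_subset[of _ "{..M}"]) auto
    show "?G \<inter> ?T = {}"
      unfolding m_generators_def by force
  qed (use finite_generators in simp)
  also have "card ?T = card {u \<in> \<Delta>. u + m \<le> M}"
    by (rule card_image) (simp add: inj_on_def)
  finally show ?thesis .
qed

lemma card_le_Suc_mult_n:
  "card {t \<in> \<Delta>. t \<le> Suc i * n} + height (Suc i) = card {t \<in> \<Delta>. t \<le> i * n} + n"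
proof -
  have "{t \<in> \<Delta>. t \<le> Suc i * n} = {t \<in> \<Delta>. t < Suc (i * n) + n}"
    "{t \<in> \<Delta>. t \<le> i * n} = {t \<in> \<Delta>. t < Suc (i * n)}"
    by auto
  moreover have "height (Suc i) = g (Suc (i * n))"
    unfolding height_def using g_Suc_eq[OF mult_n_mem] by simp
  ultimately show ?thesis
    using card_Collect_less_add[of \<Delta> "Suc (i * n)" n] card_window_Int_add_gfun[of "Suc (i * n)" n \<Delta>]
    by simp
qed

lemma card_shifted_le_Suc_mult_n:
  "card {u \<in> \<Delta>. u + m \<le> Suc i * n} + height (Suc i - k) = card {u \<in> \<Delta>. u + m \<le> i * n} + n"
proof (cases "k \<le> i")
  case True
  define L where "L = (i - k) * n"
  have "i * n = L + k * n"
    unfolding L_def using True by (metis add_mult_distrib le_add_diff_inverse2)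
  then have "{u \<in> \<Delta>. u + m \<le> Suc i * n} = {u \<in> \<Delta>. u < L + n}"
    "{u \<in> \<Delta>. u + m \<le> i * n} = {u \<in> \<Delta>. u < L}"
    by auto
  moreover have "height (Suc i - k) = g L"
    unfolding height_def L_def using True by (simp add: Suc_diff_le)
  ultimately show ?thesis
    using card_Collect_less_add[of \<Delta> L n] card_window_Int_add_gfun[of L n \<Delta>] by simp
next
  case False
  then have "Suc i * n \<le> k * n"
    by (intro mult_le_mono1) simp
  then have "{u \<in> \<Delta>. u + m \<le> Suc i * n} = {}" "{u \<in> \<Delta>. u + m \<le> i * n} = {}"
    by auto
  moreover have "height (Suc i - k) = n"
    unfolding height_def using False by simp
  ultimately show ?thesis
    by (simp only: card.empty add_0)
qed

lemma num_gens_Suc: "num_gens (Suc i) + height (Suc i) = num_gens i + height (Suc i - k)"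
  using card_le_eq_generators_add[of "i * n"] card_le_eq_generators_add[of "Suc i * n"]
    card_le_Suc_mult_n[of i] card_shifted_le_Suc_mult_n[of i]
  unfolding num_gens_def by linarith

lemma num_gens_0: "num_gens 0 = 1"
proof -
  have "{t \<in> gens. t \<le> 0 * n} = {0}"
    using zero_generator by auto
  then show ?thesis
    unfolding num_gens_def by simp
qed

lemma bstate_Gdiag:
  "bstate n k (Gdiag m n \<Delta>) i = (num_gens i - 1, height i, map (\<lambda>j. height j - height (Suc j)) [0..<i])"
proof (induction i)
  case 0
  then show ?case
    using num_gens_0 unfolding height_def by simp
next
  case (Suc i)
  have "colheight (Gdiag m n \<Delta>) (num_gens i - 1) = height (Suc i)"
    using colheight_num_gens unfolding height_def by simp
  moreover have "sum_list (take k (rev (map (\<lambda>j. height j - height (Suc j)) [0..<Suc i])))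
      = height (Suc i - k) - height (Suc i)"
    by (rule sum_list_take_rev_diffs) (rule height_Suc_le)
  moreover have "height (Suc i) \<le> height (Suc i - k)"
    by (rule lift_Suc_antimono_le[of height]) (use height_Suc_le in auto)
  then have "num_gens i - 1 + (height (Suc i - k) - height (Suc i)) = num_gens (Suc i) - 1"
    using num_gens_Suc[of i] num_gens_eq[of i] num_gens_eq[of "Suc i"] by linarith
  ultimately show ?case
    using Suc.IH by (simp add: Let_def)
qed

lemma yprime_Gdiag: "yprime n k (Gdiag m n \<Delta>) i = g (i * n)"
  unfolding yprime_def bstate_Gdiag using colheight_num_gens by simp

lemma bounce_Gdiag:
  "(\<exists>i. yprime n k (Gdiag m n \<Delta>) i = 0) \<and> bounce n k (Gdiag m n \<Delta>) = card (- \<Delta>)"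
proof
  show ex: "\<exists>i. yprime n k (Gdiag m n \<Delta>) i = 0"
    using g_kn_sq_eq_0 yprime_Gdiag by metis
  define L where "L = (LEAST i. yprime n k (Gdiag m n \<Delta>) i = 0)"
  have "g (L * n) = 0"
    using LeastI_ex[OF ex] yprime_Gdiag unfolding L_def by simp
  then have "- \<Delta> \<subseteq> {..<L * n}"
    using g_eq_0_imp_mem[of "L * n"] by (meson ComplD lessThan_iff not_le subsetI)
  then have "{..<Suc L * n} - \<Delta> = - \<Delta>"
    by auto
  then have "card (- \<Delta>) = (\<Sum>i<Suc L. g (i * n))"
    using card_gaps_lessThan_mult[of "Suc L" n \<Delta>] by simp
  moreover have "bounce n k (Gdiag m n \<Delta>) = (\<Sum>i\<le>L. g (i * n))"
    unfolding bounce_def L_def[symmetric] using yprime_Gdiag by (intro sum.cong) simp_all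
  ultimately show "bounce n k (Gdiag m n \<Delta>) = card (- \<Delta>)"
    by (simp add: lessThan_Suc_atMost)
qed

lemma card_Gamma_gaps_eq: "card (- Gamma m n) = card (- \<Delta>) + card (\<Delta> - Gamma m n)"
proof -
  have "- Gamma m n = - \<Delta> \<union> (\<Delta> - Gamma m n)"
    using Gamma_subset by blast
  moreover have "finite (\<Delta> - Gamma m n)"
    using finite_Gamma_kn1_gaps[OF n_pos] by (rule finite_subset[rotated]) blast
  ultimately show ?thesis
    using finite_gaps by (simp add: card_Un_disjoint disjoint_iff)
qed

end

theorem mainTheorem17:
  fixes n k :: nat and \<Delta> :: "nat set"
  assumes "n > 0" and "k > 0"
    and "semimodule (k * n + 1) n \<Delta>"
    and "zero_normalized \<Delta>"
  shows "(\<exists>i. yprime n k (Gdiag (k * n + 1) n \<Delta>) i = 0) \<and>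
         int (bounce n k (Gdiag (k * n + 1) n \<Delta>))
           = int (((k * n + 1) - 1) * (n - 1) div 2) - int (card (Ddiag (k * n + 1) n \<Delta>))"
proof -
  interpret kn1_semimodule n k \<Delta>
    using assms(1,3,4) by unfold_locales
  have "((k * n + 1) - 1) * (n - 1) div 2 = card (- Gamma m n)"
    using double_card_Gamma_kn1_gaps[OF n_pos, of k] by simp
  then show ?thesis
    using bounce_Gdiag card_Gamma_gaps_eq card_Ddiag_kn1[OF n_pos, of k \<Delta>] by simp
qed

end
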